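(* Let $A,B:\mathbb{R}^n\to\mathbb{R}^n$ be linear operators that are GTP with respect to a totally positive structure $\{K_1,\ldots,K_n\}$. Then $AB$ is GTP with respect to $\{K_1,\ldots,K_n\}$. If moreover one of $A$, $B$ is GSTP and the other is nonsingular (and GTP), then $AB$ is GSTP with respect to $\{K_1,\ldots,K_n\}$. In particular, if $A$ is GTP (respectively, GSTP) with respect to $\{K_1,\ldots,K_n\}$, then $A^m$ is GTP (respectively, GSTP) with respect to the same structure for every natural number $m$.
   Context: A proper cone is a closed convex cone that is pointed and solid. $\wedge^j\mathbb{R}^n$ is the $j$th exterior power of $\mathbb{R}^n$ and $\wedge^jA$ the operator with $(\wedge^jA)(x_1\wedge\cdots\wedge x_j)=Ax_1\wedge\cdots\wedge Ax_j$. An operator $C$ is $K$-nonnegative if $CK\subseteq K$, $K$-positive if $C(K\setminus\{0\})\subseteq\operatorname{int}K$. A totally positive structure is a family $\{K_1,\ldots,K_n\}$ with $K_j\subset\wedge^j\mathbb{R}^n$ a proper cone; $A$ is GTP (resp. GSTP) with respect to it if $\wedge^jA$ is $K_j$-nonnegative (resp. $K_j$-positive) for every $j=1,\ldots,n$. *)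

theory Defs
  imports "HOL-Analysis.Analysis"
begin

text \<open>Concrete model of the exterior algebra of R^n, where R^n = real^'n::{finite,linorder}.
  A vector of real^('n::{finite,linorder} set) has one coordinate for every subset I of the index set;
  the j-th exterior power is the subspace of vectors supported on the j-subsets I,
  the coordinate at I being the coefficient of the standard basis vector
  e_{i_1} wedge ... wedge e_{i_j} with i_1 < ... < i_j the elements of I.\<close>

definition ext_space :: "nat \<Rightarrow> (real^('n::{finite,linorder} set)) set" where
  "ext_space j = {x. \<forall>I. card I \<noteq> j \<longrightarrow> x $ I = 0}"

definition det_fun :: "nat \<Rightarrow> (nat \<Rightarrow> nat \<Rightarrow> real) \<Rightarrow> real" where
  "det_fun j M = (\<Sum>p | p permutes {..<j}. of_int (sign p) * (\<Prod>k<j. M k (p k)))"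

text \<open>The operator wedge^j A in the standard basis of wedge^j R^n: the j-th compound matrix,
  whose (I,J) entry is the minor of A with rows I and columns J (both increasingly ordered).\<close>
definition ext_pow :: "nat \<Rightarrow> real^('n::{finite,linorder})^'n::{finite,linorder} \<Rightarrow> real^('n::{finite,linorder} set)^('n::{finite,linorder} set)" where
  "ext_pow j A = (\<chi> I J. if card I = j \<and> card J = j
      then det_fun j (\<lambda>a b. A $ (sorted_list_of_set I ! a) $ (sorted_list_of_set J ! b))
      else 0)"

definition proper_cone_in :: "'a::real_normed_vector set \<Rightarrow> 'a set \<Rightarrow> bool" where
  "proper_cone_in V K \<longleftrightarrow> K \<subseteq> V \<and> closed K \<and> convex K \<and> cone K \<and>
     K \<inter> uminus ` K = {0} \<and> (top_of_set V) interior_of K \<noteq> {}"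

definition K_nonneg :: "'a::real_normed_vector set \<Rightarrow> 'a set \<Rightarrow> ('a \<Rightarrow> 'a) \<Rightarrow> bool" where
  "K_nonneg V K C \<longleftrightarrow> C ` K \<subseteq> K"

definition K_pos :: "'a::real_normed_vector set \<Rightarrow> 'a set \<Rightarrow> ('a \<Rightarrow> 'a) \<Rightarrow> bool" where
  "K_pos V K C \<longleftrightarrow> C ` (K - {0}) \<subseteq> (top_of_set V) interior_of K"

definition tp_structure :: "(nat \<Rightarrow> (real^('n::{finite,linorder} set)) set) \<Rightarrow> bool" where
  "tp_structure K \<longleftrightarrow> (\<forall>j\<in>{1..CARD('n::{finite,linorder})}. proper_cone_in (ext_space j :: (real^('n::{finite,linorder} set)) set) (K j))"

definition GTP :: "(nat \<Rightarrow> (real^('n::{finite,linorder} set)) set) \<Rightarrow> real^'n::{finite,linorder}^'n::{finite,linorder} \<Rightarrow> bool" where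
  "GTP K A \<longleftrightarrow> (\<forall>j\<in>{1..CARD('n::{finite,linorder})}. K_nonneg (ext_space j) (K j) (\<lambda>x. ext_pow j A *v x))"

definition GSTP :: "(nat \<Rightarrow> (real^('n::{finite,linorder} set)) set) \<Rightarrow> real^'n::{finite,linorder}^'n::{finite,linorder} \<Rightarrow> bool" where
  "GSTP K A \<longleftrightarrow> (\<forall>j\<in>{1..CARD('n::{finite,linorder})}. K_pos (ext_space j) (K j) (\<lambda>x. ext_pow j A *v x))"

definition mat_pow :: "real^'n::{finite,linorder}^'n::{finite,linorder} \<Rightarrow> nat \<Rightarrow> real^'n::{finite,linorder}^'n::{finite,linorder}" where
  "mat_pow A m = (((**) A) ^^ m) (mat 1)"

end

theory Submission
  imports Defs
begin

text \<open>By the Cauchy--Binet formula the compound matrices are multiplicative,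
  \<open>\<wedge>\<^sup>j(AB) = \<wedge>\<^sup>jA \<wedge>\<^sup>jB\<close>, so every claim reduces to composing maps of the cone \<open>K\<^sub>j\<close>
  inside \<open>\<wedge>\<^sup>j\<real>\<^sup>n\<close>. Nonnegative maps compose. A positive map stays positive after
  precomposition with a nonnegative map that is injective on \<open>K\<^sub>j\<close>, and after
  postcomposition with a nonnegative map that is a homeomorphism of \<open>\<wedge>\<^sup>j\<real>\<^sup>n\<close> (it sends
  the relative interior of \<open>K\<^sub>j\<close> into itself); for nonsingular \<open>A\<close> both hold for
  \<open>\<wedge>\<^sup>jA\<close>, whose inverse is \<open>\<wedge>\<^sup>j(A\<^sup>-\<^sup>1)\<close>. Two positive maps compose to a positive map
  because a pointed cone has no interior point at \<open>0\<close>.\<close>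

lemma det_fun_cong:
  assumes "\<And>a b. a < j \<Longrightarrow> b < j \<Longrightarrow> M a b = N a b"
  shows "det_fun j M = det_fun j N"
  unfolding det_fun_def
  using assms by (intro sum.cong refl arg_cong2[where f="(*)"] prod.cong)
    (auto dest: permutes_in_image)

lemma det_fun_zero_row:
  assumes "a < j" "\<And>b. b < j \<Longrightarrow> M a b = 0"
  shows "det_fun j M = 0"
  unfolding det_fun_def
proof (rule sum.neutral, safe)
  fix p assume p: "p permutes {..<j}"
  have "(\<Prod>k<j. M k (p k)) = 0"
    using assms permutes_in_image[OF p] by (intro prod_zero) auto
  then show "of_int (sign p) * (\<Prod>k<j. M k (p k)) = 0" by simp
qed

lemma det_fun_permute_rows:
  assumes s: "s permutes {..<j}"
  shows "det_fun j (\<lambda>a b. M (s a) b) = of_int (sign s) * det_fun j M"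
proof -
  have "det_fun j (\<lambda>a b. M (s a) b) =
      (\<Sum>p | p permutes {..<j}. of_int (sign (p \<circ> s)) * (\<Prod>k<j. M (s k) ((p \<circ> s) k)))"
    unfolding det_fun_def by (rule sum_permutations_compose_right[OF s])
  also have "\<dots> = (\<Sum>p | p permutes {..<j}. of_int (sign s) * (of_int (sign p) * (\<Prod>k<j. M k (p k))))"
  proof (rule sum.cong[OF refl])
    fix p assume "p \<in> {p. p permutes {..<j}}"
    then have p: "p permutes {..<j}" by simp
    have "sign (p \<circ> s) = sign p * sign s"
      by (rule sign_compose) (use p s permutation_permutes in auto)
    moreover have "(\<Prod>k<j. M (s k) ((p \<circ> s) k)) = (\<Prod>k<j. M k (p k))"
      using prod.permute[OF s, of "\<lambda>k. M k (p k)"] by (simp add: o_def)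
    ultimately show "of_int (sign (p \<circ> s)) * (\<Prod>k<j. M (s k) ((p \<circ> s) k)) =
        of_int (sign s) * (of_int (sign p) * (\<Prod>k<j. M k (p k)))" by simp
  qed
  also have "\<dots> = of_int (sign s) * det_fun j M"
    unfolding det_fun_def by (simp add: sum_distrib_left)
  finally show ?thesis .
qed

lemma det_fun_identical_rows:
  assumes "a1 < j" "a2 < j" "a1 \<noteq> a2" and eq: "\<And>b. M a1 b = M a2 b"
  shows "det_fun j M = 0"
proof -
  let ?t = "Transposition.transpose a1 a2"
  have t: "?t permutes {..<j}" using assms by (intro permutes_swap_id) auto
  have "M (?t a) = M a" for a using eq by (auto simp: Transposition.transpose_def)
  then have "det_fun j M = det_fun j (\<lambda>a b. M (?t a) b)" by simp
  also have "\<dots> = - det_fun j M"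
    using det_fun_permute_rows[OF t, of M] assms by (simp add: sign_swap_id)
  finally show ?thesis by simp
qed

lemma det_fun_identity: "det_fun j (\<lambda>a b. if a = b then 1 else 0) = 1"
proof -
  have "of_int (sign p) * (\<Prod>k<j. if k = p k then 1 else 0) = (if p = id then 1 else (0::real))"
    if p: "p permutes {..<j}" for p
  proof (cases "p = id")
    case False
    then obtain k where "p k \<noteq> k" by (auto simp: fun_eq_iff)
    moreover from this have "k < j" using p by (meson lessThan_iff permutes_def)
    ultimately have "(\<Prod>k<j. if k = p k then 1 else 0) = (0::real)"
      by (intro prod_zero) (auto intro!: bexI[of _ k])
    then show ?thesis using False by simp
  qed (simp add: sign_id)
  then have "det_fun j (\<lambda>a b. if a = b then 1 else 0) =
      (\<Sum>p | p permutes {..<j}. if p = id then 1 else 0)"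
    unfolding det_fun_def by (intro sum.cong) auto
  also have "\<dots> = 1"
    using permutes_id[of "{..<j}"] finite_permutations[of "{..<j}"] by (simp add: sum.delta')
  finally show ?thesis .
qed

lemma det_fun_mult_expand_rows:
  fixes M :: "nat \<Rightarrow> 'k::finite \<Rightarrow> real" and N :: "'k \<Rightarrow> nat \<Rightarrow> real"
  shows "det_fun j (\<lambda>a b. \<Sum>k\<in>UNIV. M a k * N k b) =
    (\<Sum>f\<in>{f \<in> PiE {..<j} (\<lambda>_. UNIV). inj_on f {..<j}}.
        (\<Prod>a<j. M a (f a)) * det_fun j (\<lambda>a b. N (f a) b))"
proof -
  let ?F = "PiE {..<j} (\<lambda>_. UNIV :: 'k set)" and ?perms = "{p. p permutes {..<j}}"
  have "det_fun j (\<lambda>a b. \<Sum>k\<in>UNIV. M a k * N k b) =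
      (\<Sum>p\<in>?perms. of_int (sign p) * (\<Sum>f\<in>?F. \<Prod>a<j. M a (f a) * N (f a) (p a)))"
    unfolding det_fun_def by (intro sum.cong refl arg_cong2[where f="(*)"] prod_sum_PiE) auto
  also have "\<dots> = (\<Sum>f\<in>?F. \<Sum>p\<in>?perms. (\<Prod>a<j. M a (f a)) * (of_int (sign p) * (\<Prod>a<j. N (f a) (p a))))"
    by (subst sum.swap) (simp add: sum_distrib_left prod.distrib mult_ac)
  also have "\<dots> = (\<Sum>f\<in>?F. (\<Prod>a<j. M a (f a)) * det_fun j (\<lambda>a b. N (f a) b))"
    unfolding det_fun_def by (simp add: sum_distrib_left)
  also have "\<dots> = (\<Sum>f\<in>{f \<in> ?F. inj_on f {..<j}}. (\<Prod>a<j. M a (f a)) * det_fun j (\<lambda>a b. N (f a) b))"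
  proof (rule sum.mono_neutral_right)
    show "\<forall>f\<in>?F - {f \<in> ?F. inj_on f {..<j}}. (\<Prod>a<j. M a (f a)) * det_fun j (\<lambda>a b. N (f a) b) = 0"
    proof
      fix f assume "f \<in> ?F - {f \<in> ?F. inj_on f {..<j}}"
      then obtain a1 a2 where "a1 < j" "a2 < j" "a1 \<noteq> a2" "f a1 = f a2"
        unfolding inj_on_def by auto
      then show "(\<Prod>a<j. M a (f a)) * det_fun j (\<lambda>a b. N (f a) b) = 0"
        by (simp add: det_fun_identical_rows[of a1 j a2])
    qed
  qed (auto intro: finite_PiE)
  finally show ?thesis .
qed

text \<open>An injective \<open>f : {..<j} \<rightarrow> 'k\<close> factors uniquely as the increasing enumeration
  of its image after a permutation of \<open>{..<j}\<close>.\<close>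

lemma bij_betw_sorted_list_permutes:
  "bij_betw (\<lambda>(S, s). restrict (\<lambda>a. sorted_list_of_set S ! s a) {..<j})
     (SIGMA S:{S::'k::{finite,linorder} set. card S = j}. {s. s permutes {..<j}})
     {f \<in> PiE {..<j} (\<lambda>_. UNIV). inj_on f {..<j}}"
proof -
  have nth_bij: "bij_betw ((!) (sorted_list_of_set S)) {..<j} S" if "card S = j" for S :: "'k set"
    using that by (intro bij_betw_nth) auto
  have image: "(\<lambda>a. sorted_list_of_set S ! s a) ` {..<j} = S"
    if "card S = j" "s permutes {..<j}" for S :: "'k set" and s
    using bij_betw_imp_surj_on[OF nth_bij[OF that(1)]] permutes_image[OF that(2)]
    by (metis image_image)
  have inj: "inj_on ((!) (sorted_list_of_set S)) {..<j}" if "card S = j" for S :: "'k set"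
    using nth_bij[OF that] by (rule bij_betw_imp_inj_on)
  let ?\<Phi> = "\<lambda>(S, s). restrict (\<lambda>a. sorted_list_of_set S ! s a) {..<j}"
    and ?D = "SIGMA S:{S::'k set. card S = j}. {s. s permutes {..<j}}"
  show ?thesis
  proof (rule bij_betw_imageI)
    show "inj_on ?\<Phi> ?D"
    proof (rule inj_onI)
      fix x y assume "x \<in> ?D" "y \<in> ?D" and eq: "?\<Phi> x = ?\<Phi> y"
      then obtain S s S' s' where xy: "x = (S, s)" "y = (S', s')"
        and S: "card S = j" "s permutes {..<j}" and S': "card S' = j" "s' permutes {..<j}"
        by auto
      have "S = ?\<Phi> x ` {..<j}" "S' = ?\<Phi> y ` {..<j}"
        using image[OF S] image[OF S'] xy by simp_all
      then have "S = S'" using eq by simp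
      have "s a = s' a" for a
      proof (cases "a < j")
        case True
        then have "sorted_list_of_set S ! s a = sorted_list_of_set S ! s' a"
          using fun_cong[OF eq, of a] xy \<open>S = S'\<close> by simp
        then show ?thesis
          using inj_onD[OF inj[OF S(1)]] True permutes_in_image[OF S(2)] permutes_in_image[OF S'(2)]
          by auto
      qed (use S S' in \<open>simp add: permutes_def\<close>)
      then show "x = y" using xy \<open>S = S'\<close> by auto
    qed
    show "?\<Phi> ` ?D = {f \<in> PiE {..<j} (\<lambda>_. UNIV). inj_on f {..<j}}"
    proof (intro equalityI subsetI)
      fix f assume "f \<in> ?\<Phi> ` ?D"
      then obtain S s where f: "f = restrict (\<lambda>a. sorted_list_of_set S ! s a) {..<j}"
        and S: "card S = j" "s permutes {..<j}"
        by auto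
      have "inj_on ((!) (sorted_list_of_set S) \<circ> s) {..<j}"
        using S by (intro comp_inj_on) (simp_all add: inj permutes_inj_on permutes_image)
      then show "f \<in> {f \<in> PiE {..<j} (\<lambda>_. UNIV). inj_on f {..<j}}"
        by (simp add: f o_def)
    next
      fix f assume "f \<in> {f \<in> PiE {..<j} (\<lambda>_. UNIV :: 'k set). inj_on f {..<j}}"
      then have f: "f \<in> PiE {..<j} (\<lambda>_. UNIV)" "inj_on f {..<j}" by auto
      define S where "S = f ` {..<j}"
      let ?e = "(!) (sorted_list_of_set S)"
      have S: "card S = j" unfolding S_def using card_image[OF f(2)] by simp
      define s where "s a = (if a < j then inv_into {..<j} ?e (f a) else a)" for a
      have "bij_betw (inv_into {..<j} ?e \<circ> f) {..<j} {..<j}"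
        using inj_on_imp_bij_betw[OF f(2), folded S_def] bij_betw_inv_into[OF nth_bij[OF S]]
        by (rule bij_betw_trans)
      then have "bij_betw s {..<j} {..<j}"
        by (rule bij_betw_cong[THEN iffD1, rotated]) (auto simp: s_def)
      then have "s permutes {..<j}"
        by (rule bij_imp_permutes) (auto simp: s_def)
      moreover have "restrict (\<lambda>a. sorted_list_of_set S ! s a) {..<j} = f"
      proof
        fix a show "restrict (\<lambda>a. sorted_list_of_set S ! s a) {..<j} a = f a"
          using f(1) bij_betw_imp_surj_on[OF nth_bij[OF S]]
          by (cases "a < j") (auto simp: s_def S_def f_inv_into_f PiE_def extensional_def)
      qed
      ultimately show "f \<in> ?\<Phi> ` ?D"
        using S by (intro image_eqI[where x="(S, s)"]) auto
    qed
  qed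
qed

lemma det_fun_cauchy_binet:
  fixes M :: "nat \<Rightarrow> 'k::{finite,linorder} \<Rightarrow> real" and N :: "'k \<Rightarrow> nat \<Rightarrow> real"
  shows "det_fun j (\<lambda>a b. \<Sum>k\<in>UNIV. M a k * N k b) =
    (\<Sum>S | card S = j. det_fun j (\<lambda>a b. M a (sorted_list_of_set S ! b)) *
        det_fun j (\<lambda>a b. N (sorted_list_of_set S ! a) b))"
proof -
  let ?g = "\<lambda>f. (\<Prod>a<j. M a (f a)) * det_fun j (\<lambda>a b. N (f a) b)"
  have inner: "(\<Sum>s | s permutes {..<j}. ?g (restrict (\<lambda>a. sorted_list_of_set S ! s a) {..<j})) =
      det_fun j (\<lambda>a b. M a (sorted_list_of_set S ! b)) * det_fun j (\<lambda>a b. N (sorted_list_of_set S ! a) b)"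
    for S :: "'k set"
  proof -
    let ?l = "sorted_list_of_set S"
    have "?g (restrict (\<lambda>a. ?l ! s a) {..<j}) =
        (of_int (sign s) * (\<Prod>a<j. M a (?l ! s a))) * det_fun j (\<lambda>a b. N (?l ! a) b)"
      if s: "s permutes {..<j}" for s
    proof -
      have "?g (restrict (\<lambda>a. ?l ! s a) {..<j}) = (\<Prod>a<j. M a (?l ! s a)) * det_fun j (\<lambda>a b. N (?l ! s a) b)"
        by (intro arg_cong2[where f="(*)"] prod.cong det_fun_cong) auto
      with det_fun_permute_rows[OF s, of "\<lambda>a b. N (?l ! a) b"] show ?thesis by simp
    qed
    then have "(\<Sum>s | s permutes {..<j}. ?g (restrict (\<lambda>a. ?l ! s a) {..<j})) =
        (\<Sum>s | s permutes {..<j}. (of_int (sign s) * (\<Prod>a<j. M a (?l ! s a))) * det_fun j (\<lambda>a b. N (?l ! a) b))"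
      by (intro sum.cong) auto
    then show ?thesis by (simp add: det_fun_def sum_distrib_right)
  qed
  have "det_fun j (\<lambda>a b. \<Sum>k\<in>UNIV. M a k * N k b) =
      (\<Sum>f\<in>{f \<in> PiE {..<j} (\<lambda>_. UNIV). inj_on f {..<j}}. ?g f)"
    by (rule det_fun_mult_expand_rows)
  also have "\<dots> = (\<Sum>(S, s)\<in>(SIGMA S:{S. card S = j}. {s. s permutes {..<j}}).
      ?g (restrict (\<lambda>a. sorted_list_of_set S ! s a) {..<j}))"
    by (subst sum.reindex_bij_betw[OF bij_betw_sorted_list_permutes, symmetric]) (simp add: case_prod_unfold)
  also have "\<dots> = (\<Sum>S | card S = j. \<Sum>s | s permutes {..<j}.
      ?g (restrict (\<lambda>a. sorted_list_of_set S ! s a) {..<j}))"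
    by (rule sum.Sigma[symmetric]) (auto intro: finite_permutations)
  also have "\<dots> = (\<Sum>S | card S = j. det_fun j (\<lambda>a b. M a (sorted_list_of_set S ! b)) *
      det_fun j (\<lambda>a b. N (sorted_list_of_set S ! a) b))"
    by (rule sum.cong[OF refl inner])
  finally show ?thesis .
qed

lemma proper_cone_in_subset: "proper_cone_in V K \<Longrightarrow> K \<subseteq> V"
  unfolding proper_cone_in_def by auto

lemma proper_cone_in_zero_notin_interior:
  assumes "subspace V" "V \<noteq> {0}" and K: "proper_cone_in V K"
  shows "0 \<notin> top_of_set V interior_of K"
proof
  assume "0 \<in> top_of_set V interior_of K"
  then obtain T where T: "open T" "0 \<in> T" "V \<inter> T \<subseteq> K"
    unfolding interior_of_def openin_open by auto
  then obtain \<epsilon> where \<epsilon>: "\<epsilon> > 0" "ball 0 \<epsilon> \<subseteq> T" using open_contains_ball by blast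
  obtain e where e: "e \<in> V" "e \<noteq> 0" using assms(1,2) subspace_0 by blast
  define v where "v = (\<epsilon> / (2 * norm e)) *\<^sub>R e"
  have "norm v = \<epsilon> / 2" using \<epsilon> e by (simp add: v_def)
  moreover have "v \<in> V" "- v \<in> V" using assms(1) e by (simp_all add: v_def subspace_mul subspace_neg)
  ultimately have "v \<in> K" "- v \<in> K" using \<epsilon> T by (auto simp: subset_iff)
  then have "v \<in> K \<inter> uminus ` K" by (auto intro: rev_image_eqI[of "- v"])
  then have "v = 0" using K unfolding proper_cone_in_def by auto
  with \<open>norm v = \<epsilon> / 2\<close> \<epsilon> show False by simp
qed

lemma K_nonneg_comp:
  "K_nonneg V K f \<Longrightarrow> K_nonneg V K g \<Longrightarrow> K_nonneg V K (\<lambda>x. f (g x))"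
  unfolding K_nonneg_def by auto

lemma K_pos_comp_K_pos:
  assumes "subspace V" "V \<noteq> {0}" "proper_cone_in V K" "K_pos V K f" "K_pos V K g"
  shows "K_pos V K (\<lambda>x. f (g x))"
  unfolding K_pos_def image_subset_iff
proof
  fix x assume "x \<in> K - {0}"
  then have "g x \<in> top_of_set V interior_of K" using \<open>K_pos V K g\<close> unfolding K_pos_def by blast
  moreover from this have "g x \<in> K - {0}"
    using proper_cone_in_zero_notin_interior[OF assms(1-3)] interior_of_subset[of "top_of_set V" K]
    by auto
  ultimately show "f (g x) \<in> top_of_set V interior_of K"
    using \<open>K_pos V K f\<close> unfolding K_pos_def by blast
qed

lemma K_pos_comp_K_nonneg:
  assumes "K_pos V K f" "K_nonneg V K g" "\<And>x. x \<in> K \<Longrightarrow> g x = 0 \<Longrightarrow> x = 0"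
  shows "K_pos V K (\<lambda>x. f (g x))"
  using assms unfolding K_pos_def K_nonneg_def by blast

lemma K_nonneg_comp_K_pos:
  assumes f: "homeomorphic_map (top_of_set V) (top_of_set V) f" and "K \<subseteq> V"
    and "K_nonneg V K f" "K_pos V K g"
  shows "K_pos V K (\<lambda>x. f (g x))"
proof -
  have "f ` (top_of_set V interior_of K) = top_of_set V interior_of (f ` K)"
    using homeomorphic_map_interior_of[OF f] \<open>K \<subseteq> V\<close> by simp
  also have "\<dots> \<subseteq> top_of_set V interior_of K"
    using \<open>K_nonneg V K f\<close> unfolding K_nonneg_def by (rule interior_of_mono)
  finally have "f ` (top_of_set V interior_of K) \<subseteq> top_of_set V interior_of K" .
  with \<open>K_pos V K g\<close> show ?thesis
    unfolding K_pos_def by (simp add: image_subset_iff)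
qed

lemma ext_pow_mult:
  fixes A B :: "real^'n::{finite,linorder}^'n::{finite,linorder}"
  shows "ext_pow j (A ** B) = ext_pow j A ** ext_pow j B"
proof -
  have "ext_pow j (A ** B) $ I $ J = (ext_pow j A ** ext_pow j B) $ I $ J" for I J
  proof (cases "card I = j \<and> card J = j")
    case True
    let ?lI = "sorted_list_of_set I" and ?lJ = "sorted_list_of_set J"
    have "(ext_pow j A ** ext_pow j B) $ I $ J =
        (\<Sum>S\<in>UNIV. if card S = j then det_fun j (\<lambda>a b. A $ (?lI ! a) $ (sorted_list_of_set S ! b)) *
          det_fun j (\<lambda>a b. B $ (sorted_list_of_set S ! a) $ (?lJ ! b)) else 0)"
      using True by (auto simp: matrix_matrix_mult_def ext_pow_def intro: sum.cong)
    also have "\<dots> = (\<Sum>S | card S = j. det_fun j (\<lambda>a b. A $ (?lI ! a) $ (sorted_list_of_set S ! b)) *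
        det_fun j (\<lambda>a b. B $ (sorted_list_of_set S ! a) $ (?lJ ! b)))"
      by (subst sum.inter_filter[symmetric]) auto
    also have "\<dots> = det_fun j (\<lambda>a b. \<Sum>k\<in>UNIV. A $ (?lI ! a) $ k * B $ k $ (?lJ ! b))"
      by (rule det_fun_cauchy_binet[symmetric])
    also have "\<dots> = ext_pow j (A ** B) $ I $ J"
      using True by (simp add: ext_pow_def matrix_matrix_mult_def)
    finally show ?thesis by simp
  qed (auto simp: ext_pow_def matrix_matrix_mult_def)
  then show ?thesis by (simp add: vec_eq_iff)
qed

lemma ext_pow_mat_1:
  "ext_pow j (mat 1 :: real^'n::{finite,linorder}^'n::{finite,linorder}) $ I $ J = (if card I = j \<and> J = I then 1 else 0)"
proof (cases "card I = j \<and> card J = j")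
  case True
  let ?lI = "sorted_list_of_set I" and ?lJ = "sorted_list_of_set J"
  show ?thesis
  proof (cases "J = I")
    case True
    have "det_fun j (\<lambda>a b. mat 1 $ (?lI ! a) $ (?lI ! b)) =
        det_fun j (\<lambda>a b. if a = b then 1 else 0)"
      using \<open>card I = j \<and> card J = j\<close> by (intro det_fun_cong) (simp add: mat_def nth_eq_iff_index_eq)
    then show ?thesis using \<open>card I = j \<and> card J = j\<close> True by (simp add: ext_pow_def det_fun_identity)
  next
    case False
    with True obtain i where i: "i \<in> I" "i \<notin> J" by (metis card_subset_eq finite subsetI)
    then obtain a where a: "a < j" "?lI ! a = i"
      using True by (metis in_set_conv_nth length_sorted_list_of_set set_sorted_list_of_set finite)
    have "?lJ ! b \<in> J" if "b < j" for b
      using that True by (metis nth_mem length_sorted_list_of_set set_sorted_list_of_set finite)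
    then have "det_fun j (\<lambda>a b. mat 1 $ (?lI ! a) $ (?lJ ! b)) = 0"
      using a i by (intro det_fun_zero_row[OF a(1)]) (auto simp: mat_def)
    then show ?thesis using True False by (simp add: ext_pow_def)
  qed
qed (auto simp: ext_pow_def)

lemma ext_pow_mat_1_mult_vec:
  assumes "x \<in> ext_space j"
  shows "ext_pow j (mat 1 :: real^'n::{finite,linorder}^'n::{finite,linorder}) *v x = x"
proof -
  have "(ext_pow j (mat 1 :: real^'n::{finite,linorder}^'n::{finite,linorder}) *v x) $ I =
      (\<Sum>J\<in>UNIV. if J = I then (if card I = j then x $ J else 0) else 0)" for I
    unfolding matrix_vector_mult_def ext_pow_mat_1 vec_lambda_beta by (rule sum.cong) auto
  also have "\<dots> I = x $ I" for I
    using assms by (simp add: ext_space_def)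
  finally show ?thesis by (simp add: vec_eq_iff)
qed

lemma ext_pow_mult_vec_in_ext_space:
  "ext_pow j (A :: real^'n::{finite,linorder}^'n::{finite,linorder}) *v x \<in> ext_space j"
  by (simp add: ext_space_def matrix_vector_mult_def ext_pow_def)

lemma subspace_ext_space: "subspace (ext_space j)"
  by (auto simp: subspace_def ext_space_def)

lemma ext_space_nontrivial:
  assumes "j \<le> CARD('n::{finite,linorder})"
  shows "(ext_space j :: (real^('n set)) set) \<noteq> {0}"
proof -
  obtain I :: "'n set" where "card I = j"
    using obtain_subset_with_card_n[of j "UNIV :: 'n set"] assms by auto
  then have "(\<chi> J. if J = I then 1 else 0) \<in> (ext_space j :: (real^('n set)) set)"
    by (simp add: ext_space_def)
  moreover have "(\<chi> J. if J = I then 1 else 0) \<noteq> (0 :: real^('n set))"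
    by (auto simp: vec_eq_iff)
  ultimately show ?thesis by blast
qed

lemma homeomorphic_map_ext_pow:
  fixes A :: "real^'n::{finite,linorder}^'n::{finite,linorder}"
  assumes "invertible A"
  shows "homeomorphic_map (top_of_set (ext_space j)) (top_of_set (ext_space j)) (\<lambda>x. ext_pow j A *v x)"
proof -
  obtain A' where "A ** A' = mat 1" "A' ** A = mat 1"
    using assms unfolding invertible_def by auto
  then have "homeomorphic_maps (top_of_set (ext_space j)) (top_of_set (ext_space j))
      (\<lambda>x. ext_pow j A *v x) (\<lambda>x. ext_pow j A' *v x)"
    unfolding homeomorphic_maps_def
    by (simp add: ext_pow_mult_vec_in_ext_space matrix_vector_mult_linear_continuous_on
        matrix_vector_mul_assoc ext_pow_mult[symmetric] ext_pow_mat_1_mult_vec)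
  then show ?thesis by (rule homeomorphic_maps_imp_map)
qed

lemma ext_pow_mult_vec:
  fixes A B :: "real^'n::{finite,linorder}^'n::{finite,linorder}"
  shows "(\<lambda>x. ext_pow j (A ** B) *v x) = (\<lambda>x. ext_pow j A *v (ext_pow j B *v x))"
  by (simp add: ext_pow_mult matrix_vector_mul_assoc)

lemma tp_structure_proper_cone:
  "tp_structure K \<Longrightarrow> j \<in> {1..CARD('n::{finite,linorder})} \<Longrightarrow>
    proper_cone_in (ext_space j :: (real^('n set)) set) (K j)"
  unfolding tp_structure_def by blast

lemma GTP_mult:
  fixes A B :: "real^'n::{finite,linorder}^'n::{finite,linorder}"
  assumes "GTP K A" "GTP K B"
  shows "GTP K (A ** B)"
  using assms unfolding GTP_def ext_pow_mult_vec by (blast intro: K_nonneg_comp)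

lemma GTP_mat_1:
  assumes "tp_structure K"
  shows "GTP K (mat 1 :: real^'n::{finite,linorder}^'n::{finite,linorder})"
  unfolding GTP_def K_nonneg_def
proof (intro ballI image_subsetI)
  fix j x assume "j \<in> {1..CARD('n)}" "x \<in> K j"
  moreover from this have "x \<in> ext_space j"
    using proper_cone_in_subset[OF tp_structure_proper_cone[OF assms]] by blast
  ultimately show "ext_pow j (mat 1) *v x \<in> K j"
    by (simp add: ext_pow_mat_1_mult_vec)
qed

lemma GSTP_mult:
  fixes A B :: "real^'n::{finite,linorder}^'n::{finite,linorder}"
  assumes "tp_structure K" "GSTP K A" "GSTP K B"
  shows "GSTP K (A ** B)"
  unfolding GSTP_def ext_pow_mult_vec
proof
  fix j assume j: "j \<in> {1..CARD('n)}"
  show "K_pos (ext_space j) (K j) (\<lambda>x. ext_pow j A *v (ext_pow j B *v x))"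
  proof (rule K_pos_comp_K_pos[where f = "\<lambda>x. ext_pow j A *v x"])
    show "(ext_space j :: (real^('n set)) set) \<noteq> {0}" using j by (intro ext_space_nontrivial) simp
  qed (use assms(2,3) j subspace_ext_space tp_structure_proper_cone[OF assms(1) j] in \<open>auto simp: GSTP_def\<close>)
qed

lemma GSTP_mult_invertible:
  fixes A B :: "real^'n::{finite,linorder}^'n::{finite,linorder}"
  assumes "tp_structure K" "GSTP K A" "GTP K B" "invertible B"
  shows "GSTP K (A ** B)"
  unfolding GSTP_def ext_pow_mult_vec
proof
  fix j assume j: "j \<in> {1..CARD('n)}"
  have ker: "x = 0" if "x \<in> K j" "ext_pow j B *v x = 0" for x
  proof (rule inj_onD[OF homeomorphic_imp_injective_map[OF homeomorphic_map_ext_pow[OF assms(4)]]])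
    show "ext_pow j B *v x = ext_pow j B *v 0" using that(2) by simp
    show "x \<in> topspace (top_of_set (ext_space j))"
      using that proper_cone_in_subset[OF tp_structure_proper_cone[OF assms(1) j]] by auto
  qed (simp add: subspace_0[OF subspace_ext_space])
  show "K_pos (ext_space j) (K j) (\<lambda>x. ext_pow j A *v (ext_pow j B *v x))"
    by (rule K_pos_comp_K_nonneg[where f = "\<lambda>x. ext_pow j A *v x"]) (use ker assms(2,3) j in \<open>auto simp: GSTP_def GTP_def\<close>)
qed

lemma GSTP_invertible_mult:
  fixes A B :: "real^'n::{finite,linorder}^'n::{finite,linorder}"
  assumes "tp_structure K" "GTP K A" "invertible A" "GSTP K B"
  shows "GSTP K (A ** B)"
  unfolding GSTP_def ext_pow_mult_vec
proof
  fix j assume j: "j \<in> {1..CARD('n)}"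
  show "K_pos (ext_space j) (K j) (\<lambda>x. ext_pow j A *v (ext_pow j B *v x))"
  proof (rule K_nonneg_comp_K_pos[where f = "\<lambda>x. ext_pow j A *v x"])
    show "K j \<subseteq> ext_space j"
      by (rule proper_cone_in_subset[OF tp_structure_proper_cone[OF assms(1) j]])
  qed (use homeomorphic_map_ext_pow[OF assms(3)] assms(2,4) j in \<open>auto simp: GSTP_def GTP_def\<close>)
qed

lemma GTP_mat_pow:
  assumes "tp_structure K" "GTP K A"
  shows "GTP K (mat_pow A m)"
  by (induction m) (simp_all add: mat_pow_def GTP_mat_1 GTP_mult assms)

lemma GSTP_mat_pow:
  assumes "tp_structure K" "GSTP K A" "m \<ge> 1"
  shows "GSTP K (mat_pow A m)"
  using assms(3)
proof (induction m rule: dec_induct)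
  case base
  show ?case using assms(2) by (simp add: mat_pow_def)
next
  case (step m)
  then show ?case using assms(1,2) by (simp add: mat_pow_def GSTP_mult)
qed

theorem proposition15:
  fixes K :: "nat \<Rightarrow> (real^('n::{finite,linorder} set)) set"
    and A B :: "real^'n::{finite,linorder}^'n::{finite,linorder}"
  assumes "tp_structure K"
  shows "(GTP K A \<and> GTP K B \<longrightarrow> GTP K (A ** B))
    \<and> (GTP K A \<and> GTP K B \<and> ((GSTP K A \<and> invertible B) \<or> (invertible A \<and> GSTP K B))
         \<longrightarrow> GSTP K (A ** B))
    \<and> (GTP K A \<longrightarrow> (\<forall>m. GTP K (mat_pow A m)))
    \<and> (GSTP K A \<longrightarrow> (\<forall>m\<ge>1. GSTP K (mat_pow A m)))"
  using GTP_mult GSTP_mult_invertible[OF assms] GSTP_invertible_mult[OF assms]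
    GTP_mat_pow[OF assms] GSTP_mat_pow[OF assms] by blast

end
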